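(* Let $G$ be a finite group and $S\subseteq G\setminus\{e\}$ such that $\mathrm{Cay}(G,S)$ is a weakly distance-regular digraph, and let $\mathcal{D}(G,S)$ be its two-way distance module. Then $\mathcal{D}(G,S)$ is a primitive S-ring if and only if $\mathrm{Cay}(G,S)$ is primitive.
   Context: $\mathrm{Cay}(G,S)$ has vertex set $G$ and arcs $(x,y)$ with $yx^{-1}\in S$. For a digraph $\Gamma$, $\tilde\partial(x,y)=(\partial(x,y),\partial(y,x))$ with $\partial$ the directed distance, $\Gamma_{\tilde i}=\{(x,y):\tilde\partial(x,y)=\tilde i\}$; a strongly connected $\Gamma$ is weakly distance-regular if $(V\Gamma,\{\Gamma_{\tilde i}\})$ is an association scheme. In an association scheme, for relations $R_i,R_j$ let $R_iR_j$ be the set of relations $R_l$ with nonzero intersection number $p_{i,j}^l$; a set $F$ of relations is closed if $R_i^{\mathrm T}R_j\subseteq F$ for all $R_i,R_j\in F$; the scheme is primitive if the smallest closed set containing any non-diagonal relation is the set of all relations; $\Gamma$ is primitive if its scheme is. For $X\subseteq G$, $\underline{X}$ denotes $\sum_{x\in X}x\in\mathbb{Z}[G]$. A subring $\mathcal A\subseteq\mathbb{Z}[G]$ is an S-ring over $G$ if there is a partition $\mathcal S$ of $G$ with $\{e\}\in\mathcal S$, $X^{(-1)}=\{x^{-1}:x\in X\}\in\mathcal S$ for all $X\in\mathcal S$, and $\{\underline X:X\in\mathcal S\}$ a $\mathbb{Z}$-basis of $\mathcal A$; a subgroup $H$ of $G$ is an $\mathcal A$-subgroup if $\underline H\in\mathcal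 A$; $\mathcal A$ is primitive if it has no $\mathcal A$-subgroup other than $\{e\}$ and $G$. With $\Gamma=\mathrm{Cay}(G,S)$ and $N_{\tilde i}=\{y:\tilde\partial(e,y)=\tilde i\}$, the two-way distance module $\mathcal{D}(G,S)$ is the $\mathbb{Z}$-submodule of $\mathbb{Z}[G]$ spanned by the elements $\underline{N_{\tilde i}}$, $\tilde i$ ranging over all two-way distances of $\Gamma$. *)

theory Defs
  imports "HOL-Algebra.Group"
begin

definition strongly_connected :: "'a set \<Rightarrow> ('a \<times> 'a) set \<Rightarrow> bool" where
  "strongly_connected V E \<longleftrightarrow> (\<forall>x\<in>V. \<forall>y\<in>V. \<exists>n. (x, y) \<in> E ^^ n)"

text \<open>Directed distance (meaningful for strongly connected digraphs).\<close>
definition ddist :: "('a \<times> 'a) set \<Rightarrow> 'a \<Rightarrow> 'a \<Rightarrow> nat" where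
  "ddist E x y = (LEAST n. (x, y) \<in> E ^^ n)"

definition twoway_dist :: "('a \<times> 'a) set \<Rightarrow> 'a \<Rightarrow> 'a \<Rightarrow> nat \<times> nat" where
  "twoway_dist E x y = (ddist E x y, ddist E y x)"

definition twoway_dists :: "'a set \<Rightarrow> ('a \<times> 'a) set \<Rightarrow> (nat \<times> nat) set" where
  "twoway_dists V E = (\<lambda>(x, y). twoway_dist E x y) ` (V \<times> V)"

definition dist_rel :: "'a set \<Rightarrow> ('a \<times> 'a) set \<Rightarrow> nat \<times> nat \<Rightarrow> ('a \<times> 'a) set" where
  "dist_rel V E i = {(x, y). x \<in> V \<and> y \<in> V \<and> twoway_dist E x y = i}"

definition dist_rels :: "'a set \<Rightarrow> ('a \<times> 'a) set \<Rightarrow> ('a \<times> 'a) set set" where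
  "dist_rels V E = dist_rel V E ` twoway_dists V E"

definition inter_num :: "'a set \<Rightarrow> ('a \<times> 'a) set \<Rightarrow> ('a \<times> 'a) set \<Rightarrow> 'a \<Rightarrow> 'a \<Rightarrow> nat" where
  "inter_num V Ri Rj x y = card {z \<in> V. (x, z) \<in> Ri \<and> (z, y) \<in> Rj}"

definition assoc_scheme :: "'a set \<Rightarrow> ('a \<times> 'a) set set \<Rightarrow> bool" where
  "assoc_scheme V Rs \<longleftrightarrow>
     finite V \<and>
     (\<forall>R\<in>Rs. R \<noteq> {} \<and> R \<subseteq> V \<times> V) \<and>
     (\<forall>R\<in>Rs. \<forall>R'\<in>Rs. R \<noteq> R' \<longrightarrow> R \<inter> R' = {}) \<and>
     \<Union>Rs = V \<times> V \<and>
     Id_on V \<in> Rs \<and>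
     (\<forall>R\<in>Rs. converse R \<in> Rs) \<and>
     (\<forall>Ri\<in>Rs. \<forall>Rj\<in>Rs. \<forall>Rl\<in>Rs. \<forall>(x, y)\<in>Rl. \<forall>(x', y')\<in>Rl.
        inter_num V Ri Rj x y = inter_num V Ri Rj x' y')"

definition rel_prod :: "'a set \<Rightarrow> ('a \<times> 'a) set set \<Rightarrow> ('a \<times> 'a) set \<Rightarrow> ('a \<times> 'a) set \<Rightarrow> ('a \<times> 'a) set set" where
  "rel_prod V Rs Ri Rj = {Rl \<in> Rs. \<exists>(x, y)\<in>Rl. inter_num V Ri Rj x y \<noteq> 0}"

definition closed_set :: "'a set \<Rightarrow> ('a \<times> 'a) set set \<Rightarrow> ('a \<times> 'a) set set \<Rightarrow> bool" where
  "closed_set V Rs F \<longleftrightarrow> (\<forall>Ri\<in>F. \<forall>Rj\<in>F. rel_prod V Rs (converse Ri) Rj \<subseteq> F)"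

definition closed_hull :: "'a set \<Rightarrow> ('a \<times> 'a) set set \<Rightarrow> ('a \<times> 'a) set \<Rightarrow> ('a \<times> 'a) set set" where
  "closed_hull V Rs R = \<Inter>{F. F \<subseteq> Rs \<and> closed_set V Rs F \<and> R \<in> F}"

definition primitive_scheme :: "'a set \<Rightarrow> ('a \<times> 'a) set set \<Rightarrow> bool" where
  "primitive_scheme V Rs \<longleftrightarrow> (\<forall>R\<in>Rs. R \<noteq> Id_on V \<longrightarrow> closed_hull V Rs R = Rs)"

definition weakly_distance_regular :: "'a set \<Rightarrow> ('a \<times> 'a) set \<Rightarrow> bool" where
  "weakly_distance_regular V E \<longleftrightarrow>
     strongly_connected V E \<and> assoc_scheme V (dist_rels V E)"

definition primitive_digraph :: "'a set \<Rightarrow> ('a \<times> 'a) set \<Rightarrow> bool" where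
  "primitive_digraph V E \<longleftrightarrow> primitive_scheme V (dist_rels V E)"

definition cay_arcs :: "('a, 'b) monoid_scheme \<Rightarrow> 'a set \<Rightarrow> ('a \<times> 'a) set" where
  "cay_arcs G S = {(x, y). x \<in> carrier G \<and> y \<in> carrier G \<and> y \<otimes>\<^bsub>G\<^esub> inv\<^bsub>G\<^esub> x \<in> S}"

section \<open>The group ring Z[G] (G finite): functions carrier G -> int, zero outside\<close>

definition zind :: "('a, 'b) monoid_scheme \<Rightarrow> 'a set \<Rightarrow> 'a \<Rightarrow> int" where
  "zind G X = (\<lambda>g. if g \<in> carrier G \<and> g \<in> X then 1 else 0)"

definition zmult :: "('a, 'b) monoid_scheme \<Rightarrow> ('a \<Rightarrow> int) \<Rightarrow> ('a \<Rightarrow> int) \<Rightarrow> 'a \<Rightarrow> int" where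
  "zmult G f h = (\<lambda>g. if g \<in> carrier G
       then (\<Sum>x\<in>carrier G. f x * h (inv\<^bsub>G\<^esub> x \<otimes>\<^bsub>G\<^esub> g)) else 0)"

definition zgroupring :: "('a, 'b) monoid_scheme \<Rightarrow> ('a \<Rightarrow> int) set" where
  "zgroupring G = {f. \<forall>g. g \<notin> carrier G \<longrightarrow> f g = 0}"

definition zspan :: "('a \<Rightarrow> int) set \<Rightarrow> ('a \<Rightarrow> int) set" where
  "zspan B = {f. \<exists>c. f = (\<lambda>g. \<Sum>b\<in>B. c b * b g)}"

definition zindependent :: "('a \<Rightarrow> int) set \<Rightarrow> bool" where
  "zindependent B \<longleftrightarrow> (\<forall>c. (\<forall>g. (\<Sum>b\<in>B. c b * b g) = 0) \<longrightarrow> (\<forall>b\<in>B. c b = 0))"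

definition zsubring :: "('a, 'b) monoid_scheme \<Rightarrow> ('a \<Rightarrow> int) set \<Rightarrow> bool" where
  "zsubring G A \<longleftrightarrow> A \<subseteq> zgroupring G \<and>
     zind G {\<one>\<^bsub>G\<^esub>} \<in> A \<and> (\<lambda>g. 0) \<in> A \<and>
     (\<forall>f\<in>A. \<forall>h\<in>A. (\<lambda>g. f g + h g) \<in> A \<and> (\<lambda>g. - f g) \<in> A \<and> zmult G f h \<in> A)"

definition is_Sring :: "('a, 'b) monoid_scheme \<Rightarrow> ('a \<Rightarrow> int) set \<Rightarrow> bool" where
  "is_Sring G A \<longleftrightarrow> zsubring G A \<and>
     (\<exists>P. (\<forall>X\<in>P. X \<noteq> {}) \<and> (\<forall>X\<in>P. \<forall>Y\<in>P. X \<noteq> Y \<longrightarrow> X \<inter> Y = {}) \<and>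
          \<Union>P = carrier G \<and>
          {\<one>\<^bsub>G\<^esub>} \<in> P \<and>
          (\<forall>X\<in>P. (\<lambda>x. inv\<^bsub>G\<^esub> x) ` X \<in> P) \<and>
          A = zspan (zind G ` P) \<and> zindependent (zind G ` P))"

definition Sring_subgroup :: "('a, 'b) monoid_scheme \<Rightarrow> ('a \<Rightarrow> int) set \<Rightarrow> 'a set \<Rightarrow> bool" where
  "Sring_subgroup G A H \<longleftrightarrow> subgroup H G \<and> zind G H \<in> A"

definition primitive_Sring :: "('a, 'b) monoid_scheme \<Rightarrow> ('a \<Rightarrow> int) set \<Rightarrow> bool" where
  "primitive_Sring G A \<longleftrightarrow> is_Sring G A \<and>
     (\<forall>H. Sring_subgroup G A H \<longrightarrow> H = {\<one>\<^bsub>G\<^esub>} \<or> H = carrier G)"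

definition N_set :: "('a, 'b) monoid_scheme \<Rightarrow> 'a set \<Rightarrow> nat \<times> nat \<Rightarrow> 'a set" where
  "N_set G S i = {y \<in> carrier G. twoway_dist (cay_arcs G S) \<one>\<^bsub>G\<^esub> y = i}"

definition twoway_module :: "('a, 'b) monoid_scheme \<Rightarrow> 'a set \<Rightarrow> ('a \<Rightarrow> int) set" where
  "twoway_module G S = zspan ((\<lambda>i. zind G (N_set G S i)) ` twoway_dists (carrier G) (cay_arcs G S))"

end

theory Submission
  imports Defs
begin

(* Right multiplication is an automorphism of Cay(G, S), so the two-way distance
  from x to y depends only on y x^-1: the relation Gamma_i is {(x, y). y x^-1 \<in> N_i}
  for the cell N_i = {g. two-way distance from e to g is i}. Consequently the two-way
  distance module consists of the functions that are constant on cells; it is closed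
  under multiplication because the intersection numbers of the scheme are constant on
  each Gamma_i, and the cells are its basic sets.

  Both notions of primitivity are then statements about the same objects, the
  equivalence relations on G that are unions of relations Gamma_i ("saturated").
  In any association scheme the union of a closed set of relations is such an
  equivalence, and conversely the relations contained in such an equivalence form a
  closed set; so the scheme is primitive iff the only saturated equivalences are the
  trivial ones. On the S-ring side, H \<mapsto> {(x, y). y x^-1 \<in> H} is a bijection from the
  subgroups whose indicator lies in the module onto the saturated equivalences
  (saturation forces invariance under right multiplication). *)

section \<open>Closed sets of an association scheme\<close>

definition saturated :: "('a \<times> 'a) set set \<Rightarrow> ('a \<times> 'a) set \<Rightarrow> bool" where
  "saturated Rs Q \<longleftrightarrow> (\<forall>R\<in>Rs. R \<inter> Q \<noteq> {} \<longrightarrow> R \<subseteq> Q)"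

lemma saturatedD: "saturated Rs Q \<Longrightarrow> R \<in> Rs \<Longrightarrow> p \<in> R \<Longrightarrow> p \<in> Q \<Longrightarrow> R \<subseteq> Q"
  unfolding saturated_def by blast

lemma assoc_schemeD:
  assumes "assoc_scheme V Rs"
  shows "finite V" and "\<And>R. R \<in> Rs \<Longrightarrow> R \<noteq> {}" and "\<And>R. R \<in> Rs \<Longrightarrow> R \<subseteq> V \<times> V"
    and "\<Union>Rs = V \<times> V" and "Id_on V \<in> Rs"
  using assms by (simp_all add: assoc_scheme_def)

lemma assoc_scheme_eqI:
  assumes "assoc_scheme V Rs" "R \<in> Rs" "R' \<in> Rs" "p \<in> R" "p \<in> R'"
  shows "R = R'"
proof -
  have "\<forall>R\<in>Rs. \<forall>R'\<in>Rs. R \<noteq> R' \<longrightarrow> R \<inter> R' = {}"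
    using assms(1) by (simp add: assoc_scheme_def)
  with assms(2-) show ?thesis
    by blast
qed

lemma assoc_scheme_inter_num_eq:
  assumes "assoc_scheme V Rs" "Ri \<in> Rs" "Rj \<in> Rs" "Rl \<in> Rs" "(x, y) \<in> Rl" "(x', y') \<in> Rl"
  shows "inter_num V Ri Rj x y = inter_num V Ri Rj x' y'"
proof -
  have all: "\<forall>Ri\<in>Rs. \<forall>Rj\<in>Rs. \<forall>Rl\<in>Rs. \<forall>(x, y)\<in>Rl. \<forall>(x', y')\<in>Rl.
      inter_num V Ri Rj x y = inter_num V Ri Rj x' y'"
    using assms(1) by (simp add: assoc_scheme_def)
  have "\<forall>(x', y')\<in>Rl. inter_num V Ri Rj x y = inter_num V Ri Rj x' y'"
    using bspec[OF bspec[OF bspec[OF bspec[OF all assms(2)] assms(3)] assms(4)] assms(5)]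
    by (simp only: prod.case)
  from bspec[OF this assms(6)] show ?thesis
    by (simp only: prod.case)
qed

lemma inter_num_neq_0D:
  "inter_num V Ri Rj x y \<noteq> 0 \<Longrightarrow> \<exists>z\<in>V. (x, z) \<in> Ri \<and> (z, y) \<in> Rj"
  unfolding inter_num_def by (metis (no_types, lifting) card.empty empty_Collect_eq)

lemma inter_num_neq_0I:
  "finite V \<Longrightarrow> z \<in> V \<Longrightarrow> (x, z) \<in> Ri \<Longrightarrow> (z, y) \<in> Rj \<Longrightarrow> inter_num V Ri Rj x y \<noteq> 0"
  unfolding inter_num_def by auto

lemma mem_closed_hull: "R \<in> closed_hull V Rs R"
  by (simp add: closed_hull_def)

lemma closed_hull_least:
  "F \<subseteq> Rs \<Longrightarrow> closed_set V Rs F \<Longrightarrow> R \<in> F \<Longrightarrow> closed_hull V Rs R \<subseteq> F"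
  unfolding closed_hull_def by blast

lemma closed_hull_subset: "R \<in> Rs \<Longrightarrow> closed_hull V Rs R \<subseteq> Rs"
  by (rule closed_hull_least) (auto simp: closed_set_def rel_prod_def)

lemma closed_set_closed_hull: "closed_set V Rs (closed_hull V Rs R)"
  unfolding closed_set_def closed_hull_def by blast

lemma closed_set_saturated:
  assumes "sym Q" "trans Q" "saturated Rs Q"
  shows "closed_set V Rs {R \<in> Rs. R \<subseteq> Q}"
  unfolding closed_set_def
proof (intro ballI subsetI)
  fix Ri Rj Rl
  assume "Ri \<in> {R \<in> Rs. R \<subseteq> Q}" "Rj \<in> {R \<in> Rs. R \<subseteq> Q}" "Rl \<in> rel_prod V Rs (Ri\<inverse>) Rj"
  then obtain x y where Rl: "Rl \<in> Rs" "(x, y) \<in> Rl" "inter_num V (Ri\<inverse>) Rj x y \<noteq> 0"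
    unfolding rel_prod_def by auto
  from inter_num_neq_0D[OF Rl(3)] obtain z where "(x, z) \<in> Ri\<inverse>" "(z, y) \<in> Rj"
    by blast
  then have "(z, x) \<in> Q" "(z, y) \<in> Q"
    using \<open>Ri \<in> {R \<in> Rs. R \<subseteq> Q}\<close> \<open>Rj \<in> {R \<in> Rs. R \<subseteq> Q}\<close> by auto
  then have "(x, y) \<in> Q"
    using assms(1,2) by (meson symD transD)
  with Rl saturatedD[OF assms(3)] have "Rl \<subseteq> Q"
    by blast
  with Rl show "Rl \<in> {R \<in> Rs. R \<subseteq> Q}"
    by blast
qed

lemma saturated_Union:
  assumes "assoc_scheme V Rs" "C \<subseteq> Rs"
  shows "saturated Rs (\<Union>C)"
  unfolding saturated_def
proof (intro ballI impI)
  fix R assume "R \<in> Rs" "R \<inter> \<Union>C \<noteq> {}"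
  then obtain p R' where "p \<in> R" "R' \<in> C" "p \<in> R'"
    by blast
  with assms have "R = R'"
    using assoc_scheme_eqI[OF assms(1) \<open>R \<in> Rs\<close>, of R' p] by blast
  with \<open>R' \<in> C\<close> show "R \<subseteq> \<Union>C"
    by blast
qed

lemma assoc_scheme_subset_Id_on:
  assumes "assoc_scheme V Rs" "R \<in> Rs" "R \<subseteq> Id_on V"
  shows "R = Id_on V"
proof -
  obtain p where "p \<in> R"
    using assoc_schemeD(2)[OF assms(1,2)] by blast
  with assms show ?thesis
    using assoc_scheme_eqI[OF assms(1,2) assoc_schemeD(5)[OF assms(1)]] by blast
qed

lemma assoc_scheme_Union_eq_Times:
  assumes "assoc_scheme V Rs" "C \<subseteq> Rs" "\<Union>C = V \<times> V"
  shows "C = Rs"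
proof
  show "Rs \<subseteq> C"
  proof
    fix R assume "R \<in> Rs"
    then obtain p where "p \<in> R"
      using assoc_schemeD(2)[OF assms(1)] by blast
    then obtain R' where "R' \<in> C" "p \<in> R'"
      using assoc_schemeD(3)[OF assms(1) \<open>R \<in> Rs\<close>] assms(3) by blast
    then show "R \<in> C"
      using assoc_scheme_eqI[OF assms(1) \<open>R \<in> Rs\<close>, of R' p] assms(2) \<open>p \<in> R\<close> by blast
  qed
qed (rule assms(2))

lemma closed_set_Union_compose:
  assumes scheme: "assoc_scheme V Rs" and C: "C \<subseteq> Rs" "closed_set V Rs C"
    and "(z, x) \<in> \<Union>C" "(z, y) \<in> \<Union>C"
  shows "(x, y) \<in> \<Union>C"
proof -
  obtain Ri Rj where "Ri \<in> C" "Rj \<in> C" "(z, x) \<in> Ri" "(z, y) \<in> Rj"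
    using assms(4,5) by blast
  moreover from this have "x \<in> V" "y \<in> V" "z \<in> V"
    using C(1) assoc_schemeD(3)[OF scheme] by blast+
  moreover from this obtain Rl where "Rl \<in> Rs" "(x, y) \<in> Rl"
    using assoc_schemeD(4)[OF scheme] by blast
  ultimately have "Rl \<in> rel_prod V Rs (Ri\<inverse>) Rj" "(x, y) \<in> Rl"
    unfolding rel_prod_def
    using inter_num_neq_0I[OF assoc_schemeD(1)[OF scheme], of z x "Ri\<inverse>" y Rj] by auto
  with \<open>Ri \<in> C\<close> \<open>Rj \<in> C\<close> C(2) show ?thesis
    unfolding closed_set_def by blast
qed

lemma Id_on_mem_closed_set:
  assumes scheme: "assoc_scheme V Rs" and C: "C \<subseteq> Rs" "closed_set V Rs C" "C \<noteq> {}"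
  shows "Id_on V \<in> C"
proof -
  obtain a b where ab: "(a, b) \<in> \<Union>C"
    using C(1,3) assoc_schemeD(2)[OF scheme] by fast
  then obtain R where "R \<in> C" "(b, b) \<in> R"
    using closed_set_Union_compose[OF scheme C(1,2) ab ab] by blast
  moreover have "b \<in> V"
    using ab C(1) assoc_schemeD(3)[OF scheme] by blast
  ultimately show ?thesis
    using assoc_scheme_eqI[OF scheme _ assoc_schemeD(5)[OF scheme], of R "(b, b)"] C(1) by auto
qed

lemma equiv_Union_closed_set:
  assumes scheme: "assoc_scheme V Rs" and C: "C \<subseteq> Rs" "closed_set V Rs C" "C \<noteq> {}"
  shows "equiv V (\<Union>C)"
proof (rule equivI)
  note compose = closed_set_Union_compose[OF scheme C(1,2)]
  show "\<Union>C \<subseteq> V \<times> V"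
    using C(1) assoc_schemeD(3)[OF scheme] by blast
  then show refl: "refl_on V (\<Union>C)"
    using Id_on_mem_closed_set[OF assms] by (auto simp: refl_on_def)
  show sym: "sym (\<Union>C)"
  proof (rule symI)
    fix x y assume "(x, y) \<in> \<Union>C"
    moreover from this have "(x, x) \<in> \<Union>C"
      using refl \<open>\<Union>C \<subseteq> V \<times> V\<close> by (blast dest: refl_onD)
    ultimately show "(y, x) \<in> \<Union>C"
      by (rule compose)
  qed
  show "trans (\<Union>C)"
  proof (rule transI)
    fix x y z assume "(x, y) \<in> \<Union>C" "(y, z) \<in> \<Union>C"
    then show "(x, z) \<in> \<Union>C"
      using compose sym by (blast dest: symD)
  qed
qed

lemma primitive_scheme_saturated_equiv:
  assumes scheme: "assoc_scheme V Rs" and prim: "primitive_scheme V Rs"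
    and Q: "equiv V Q" "saturated Rs Q"
  shows "Q = Id_on V \<or> Q = V \<times> V"
proof (rule disjCI)
  assume "Q \<noteq> V \<times> V"
  from Q(1) have Q_sub: "Q \<subseteq> V \<times> V" and "refl_on V Q" "sym Q" "trans Q"
    by (simp_all add: equiv_def)
  have "x = y" if "(x, y) \<in> Q" for x y
  proof (rule ccontr)
    assume "x \<noteq> y"
    from that Q_sub obtain R where R: "R \<in> Rs" "(x, y) \<in> R"
      using assoc_schemeD(4)[OF scheme] by blast
    with \<open>x \<noteq> y\<close> have "closed_hull V Rs R = Rs"
      using prim by (auto simp: primitive_scheme_def)
    moreover have "R \<in> {R \<in> Rs. R \<subseteq> Q}"
      using saturatedD[OF Q(2) R that] R(1) by blast
    then have "closed_hull V Rs R \<subseteq> {R \<in> Rs. R \<subseteq> Q}"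
      using closed_set_saturated[OF \<open>sym Q\<close> \<open>trans Q\<close> Q(2)] by (intro closed_hull_least) auto
    ultimately have "\<Union>Rs \<subseteq> Q"
      by blast
    with \<open>Q \<noteq> V \<times> V\<close> Q_sub show False
      using assoc_schemeD(4)[OF scheme] by blast
  qed
  with Q_sub \<open>refl_on V Q\<close> show "Q = Id_on V"
    by (auto simp: refl_on_def)
qed

lemma primitive_schemeI_saturated_equiv:
  assumes scheme: "assoc_scheme V Rs"
    and triv: "\<And>Q. equiv V Q \<Longrightarrow> saturated Rs Q \<Longrightarrow> Q = Id_on V \<or> Q = V \<times> V"
  shows "primitive_scheme V Rs"
  unfolding primitive_scheme_def
proof (intro ballI impI)
  fix R assume R: "R \<in> Rs" "R \<noteq> Id_on V"
  define C where "C = closed_hull V Rs R"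
  have C: "C \<subseteq> Rs" "closed_set V Rs C" "R \<in> C"
    using R(1) by (simp_all add: C_def closed_hull_subset closed_set_closed_hull mem_closed_hull)
  have "\<Union>C \<noteq> Id_on V"
    using C(3) R assoc_scheme_subset_Id_on[OF scheme] by blast
  then have "\<Union>C = V \<times> V"
    using triv equiv_Union_closed_set[OF scheme C(1,2)] saturated_Union[OF scheme C(1)] C(3) by blast
  with C(1) show "closed_hull V Rs R = Rs"
    unfolding C_def by (rule assoc_scheme_Union_eq_Times[OF scheme])
qed

theorem primitive_scheme_iff_saturated_equiv:
  assumes "assoc_scheme V Rs"
  shows "primitive_scheme V Rs \<longleftrightarrow>
    (\<forall>Q. equiv V Q \<and> saturated Rs Q \<longrightarrow> Q = Id_on V \<or> Q = V \<times> V)"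
  using primitive_scheme_saturated_equiv[OF assms] primitive_schemeI_saturated_equiv[OF assms]
  by blast

section \<open>Weakly distance-regular digraphs\<close>

lemma twoway_dist_refl: "twoway_dist E x x = (0, 0)"
  by (simp add: twoway_dist_def ddist_def)

lemma ddist_eq_0D: "(x, y) \<in> E ^^ n \<Longrightarrow> ddist E x y = 0 \<Longrightarrow> x = y"
  unfolding ddist_def by (metis LeastI relpow_0_E)

lemma saturated_dist_rels_iff:
  "saturated (dist_rels V E) Q \<longleftrightarrow>
    (\<forall>x\<in>V. \<forall>y\<in>V. \<forall>x'\<in>V. \<forall>y'\<in>V.
      (x, y) \<in> Q \<longrightarrow> twoway_dist E x' y' = twoway_dist E x y \<longrightarrow> (x', y') \<in> Q)"
    (is "_ \<longleftrightarrow> ?invariant")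
proof
  assume sat: "saturated (dist_rels V E) Q"
  show ?invariant
  proof (intro ballI impI)
    fix x y x' y'
    assume V: "x \<in> V" "y \<in> V" "x' \<in> V" "y' \<in> V"
      and "(x, y) \<in> Q" "twoway_dist E x' y' = twoway_dist E x y"
    define R where "R = dist_rel V E (twoway_dist E x y)"
    have "R \<in> dist_rels V E"
      using V by (auto simp: R_def dist_rels_def twoway_dists_def)
    moreover have xy: "(x, y) \<in> R" and "(x', y') \<in> R"
      using V \<open>twoway_dist E x' y' = twoway_dist E x y\<close> by (simp_all add: R_def dist_rel_def)
    ultimately show "(x', y') \<in> Q"
      using saturatedD[OF sat _ xy \<open>(x, y) \<in> Q\<close>] by blast
  qed
next
  assume inv: ?invariant
  show "saturated (dist_rels V E) Q"
    unfolding saturated_def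
  proof (intro ballI impI subsetI)
    fix R p assume "R \<in> dist_rels V E" "R \<inter> Q \<noteq> {}" "p \<in> R"
    then obtain k where R: "R = dist_rel V E k"
      unfolding dist_rels_def by blast
    obtain x y where "(x, y) \<in> R" "(x, y) \<in> Q"
      using \<open>R \<inter> Q \<noteq> {}\<close> by auto
    obtain x' y' where p: "p = (x', y')"
      by (cases p)
    have "x \<in> V" "y \<in> V" "x' \<in> V" "y' \<in> V" "twoway_dist E x' y' = twoway_dist E x y"
      using \<open>p \<in> R\<close> \<open>(x, y) \<in> R\<close> unfolding p R dist_rel_def by simp_all
    with \<open>(x, y) \<in> Q\<close> inv show "p \<in> Q"
      unfolding p by blast
  qed
qed

lemma sum_twoway_dist_eq_inter_num:
  fixes f :: "nat \<times> nat \<Rightarrow> nat \<times> nat \<Rightarrow> 'c::semiring_1"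
  assumes "finite V" "u \<in> V" "v \<in> V"
  shows "(\<Sum>w\<in>V. f (twoway_dist E u w) (twoway_dist E w v)) =
    (\<Sum>p\<in>twoway_dists V E \<times> twoway_dists V E.
      of_nat (inter_num V (dist_rel V E (fst p)) (dist_rel V E (snd p)) u v) * f (fst p) (snd p))"
proof -
  let ?T = "twoway_dists V E"
  have "(\<Sum>w\<in>V. f (twoway_dist E u w) (twoway_dist E w v)) =
    (\<Sum>p\<in>?T \<times> ?T. \<Sum>w\<in>{w \<in> V. (twoway_dist E u w, twoway_dist E w v) = p}.
      f (twoway_dist E u w) (twoway_dist E w v))"
    by (rule sum.group[symmetric]) (use assms in \<open>auto simp: twoway_dists_def\<close>)
  also have "\<dots> = (\<Sum>p\<in>?T \<times> ?T.
      of_nat (inter_num V (dist_rel V E (fst p)) (dist_rel V E (snd p)) u v) * f (fst p) (snd p))"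
  proof (rule sum.cong[OF refl])
    fix p :: "(nat \<times> nat) \<times> nat \<times> nat"
    have "{w \<in> V. (twoway_dist E u w, twoway_dist E w v) = p} =
      {w \<in> V. (u, w) \<in> dist_rel V E (fst p) \<and> (w, v) \<in> dist_rel V E (snd p)}"
      using assms by (auto simp: dist_rel_def)
    moreover have "(\<Sum>w\<in>{w \<in> V. (twoway_dist E u w, twoway_dist E w v) = p}.
        f (twoway_dist E u w) (twoway_dist E w v)) =
      (\<Sum>w\<in>{w \<in> V. (twoway_dist E u w, twoway_dist E w v) = p}. f (fst p) (snd p))"
      by (rule sum.cong) auto
    ultimately show "(\<Sum>w\<in>{w \<in> V. (twoway_dist E u w, twoway_dist E w v) = p}.
        f (twoway_dist E u w) (twoway_dist E w v)) =
      of_nat (inter_num V (dist_rel V E (fst p)) (dist_rel V E (snd p)) u v) * f (fst p) (snd p)"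
      by (simp add: inter_num_def)
  qed
  finally show ?thesis .
qed

lemma weakly_distance_regular_sum_twoway_dist_eq:
  fixes f :: "nat \<times> nat \<Rightarrow> nat \<times> nat \<Rightarrow> 'c::semiring_1"
  assumes wdr: "weakly_distance_regular V E"
    and "u \<in> V" "v \<in> V" "u' \<in> V" "v' \<in> V" "twoway_dist E u v = twoway_dist E u' v'"
  shows "(\<Sum>w\<in>V. f (twoway_dist E u w) (twoway_dist E w v)) =
    (\<Sum>w\<in>V. f (twoway_dist E u' w) (twoway_dist E w v'))"
proof -
  have scheme: "assoc_scheme V (dist_rels V E)"
    using wdr by (simp add: weakly_distance_regular_def)
  have rel: "dist_rel V E k \<in> dist_rels V E" if "k \<in> twoway_dists V E" for k
    using that by (simp add: dist_rels_def)
  have "(u, v) \<in> dist_rel V E (twoway_dist E u v)" "(u', v') \<in> dist_rel V E (twoway_dist E u v)"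
    using assms by (simp_all add: dist_rel_def)
  moreover have "twoway_dist E u v \<in> twoway_dists V E"
    using assms by (auto simp: twoway_dists_def)
  ultimately have "inter_num V (dist_rel V E i) (dist_rel V E j) u v =
      inter_num V (dist_rel V E i) (dist_rel V E j) u' v'"
    if "i \<in> twoway_dists V E" "j \<in> twoway_dists V E" for i j
    using assoc_scheme_inter_num_eq[OF scheme rel rel rel] that by blast
  then show ?thesis
    unfolding sum_twoway_dist_eq_inter_num[OF assoc_schemeD(1)[OF scheme] assms(2,3)]
      sum_twoway_dist_eq_inter_num[OF assoc_schemeD(1)[OF scheme] assms(4,5)]
    by (intro sum.cong refl) (auto simp: mem_Times_iff)
qed

section \<open>Cayley digraphs\<close>

lemma relpow_image:
  assumes "(x, y) \<in> R ^^ n" and "\<And>x y. (x, y) \<in> R \<Longrightarrow> (f x, f y) \<in> R"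
  shows "(f x, f y) \<in> R ^^ n"
  using assms(1) by (induction n arbitrary: y) (auto intro: assms(2))

(* x and y lie in the same right coset H x. HOL-Algebra's rcong relates x and y by
  x^-1 y instead, which does not match the arc condition y x^-1 \<in> S of Cayley digraphs. *)
definition right_coset_rel :: "('a, 'b) monoid_scheme \<Rightarrow> 'a set \<Rightarrow> ('a \<times> 'a) set" where
  "right_coset_rel G H = {(x, y). x \<in> carrier G \<and> y \<in> carrier G \<and> y \<otimes>\<^bsub>G\<^esub> inv\<^bsub>G\<^esub> x \<in> H}"

context group
begin

lemma equiv_right_coset_rel:
  assumes "subgroup H G"
  shows "equiv (carrier G) (right_coset_rel G H)"
proof (rule equivI)
  show "right_coset_rel G H \<subseteq> carrier G \<times> carrier G"
    by (auto simp: right_coset_rel_def)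
  show "refl_on (carrier G) (right_coset_rel G H)"
    using subgroup.one_closed[OF assms] by (simp add: refl_on_def right_coset_rel_def)
  show "sym (right_coset_rel G H)"
  proof (rule symI)
    fix x y assume "(x, y) \<in> right_coset_rel G H"
    then have "x \<in> carrier G" "y \<in> carrier G" "y \<otimes> inv x \<in> H"
      by (simp_all add: right_coset_rel_def)
    moreover from this have "inv (y \<otimes> inv x) = x \<otimes> inv y"
      by (simp add: inv_mult_group)
    ultimately show "(y, x) \<in> right_coset_rel G H"
      using subgroup.m_inv_closed[OF assms] by (fastforce simp: right_coset_rel_def)
  qed
  show "trans (right_coset_rel G H)"
  proof (rule transI)
    fix x y z assume "(x, y) \<in> right_coset_rel G H" "(y, z) \<in> right_coset_rel G H"
    then have "x \<in> carrier G" "y \<in> carrier G" "z \<in> carrier G" "y \<otimes> inv x \<in> H" "z \<otimes> inv y \<in> H"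
      by (simp_all add: right_coset_rel_def)
    moreover from this(1-3) have "(z \<otimes> inv y) \<otimes> (y \<otimes> inv x) = z \<otimes> inv x"
      by (simp add: m_assoc[symmetric]) (simp add: m_assoc)
    ultimately show "(x, z) \<in> right_coset_rel G H"
      using subgroup.m_closed[OF assms] by (fastforce simp: right_coset_rel_def)
  qed
qed

lemma right_coset_rel_eq_Id_on_iff:
  assumes "H \<subseteq> carrier G"
  shows "right_coset_rel G H = Id_on (carrier G) \<longleftrightarrow> H = {\<one>}"
proof
  assume Id: "right_coset_rel G H = Id_on (carrier G)"
  have "(\<one>, h) \<in> right_coset_rel G H \<longleftrightarrow> h \<in> H" if "h \<in> carrier G" for h
    using that by (simp add: right_coset_rel_def)
  with Id assms show "H = {\<one>}"
    by auto
next
  have "y \<otimes> inv x = \<one> \<longleftrightarrow> x = y" if "x \<in> carrier G" "y \<in> carrier G" for x y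
    using that by (metis inv_closed inv_equality inv_inv r_inv)
  then show "H = {\<one>} \<Longrightarrow> right_coset_rel G H = Id_on (carrier G)"
    by (auto simp: right_coset_rel_def)
qed

lemma right_coset_rel_eq_Times_iff:
  assumes "H \<subseteq> carrier G"
  shows "right_coset_rel G H = carrier G \<times> carrier G \<longleftrightarrow> H = carrier G"
proof
  assume "right_coset_rel G H = carrier G \<times> carrier G"
  then have "(\<one>, h) \<in> right_coset_rel G H" if "h \<in> carrier G" for h
    using that by simp
  with assms show "H = carrier G"
    by (auto simp: right_coset_rel_def)
qed (auto simp: right_coset_rel_def)

end

locale cayley_digraph = group G for G :: "('a, 'b) monoid_scheme" (structure) +
  fixes S :: "'a set"
begin

abbreviation arcs :: "('a \<times> 'a) set" where
  "arcs \<equiv> cay_arcs G S"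

abbreviation td :: "'a \<Rightarrow> 'a \<Rightarrow> nat \<times> nat" where
  "td \<equiv> twoway_dist arcs"

abbreviation dists :: "(nat \<times> nat) set" where
  "dists \<equiv> twoway_dists (carrier G) arcs"

abbreviation rels :: "('a \<times> 'a) set set" where
  "rels \<equiv> dist_rels (carrier G) arcs"

abbreviation cell :: "nat \<times> nat \<Rightarrow> 'a set" where
  "cell \<equiv> N_set G S"

lemma cay_arcs_mult_right:
  assumes "(x, y) \<in> arcs" "a \<in> carrier G"
  shows "(x \<otimes> a, y \<otimes> a) \<in> arcs"
proof -
  have "x \<in> carrier G" "y \<in> carrier G" "y \<otimes> inv x \<in> S"
    using assms(1) by (simp_all add: cay_arcs_def)
  moreover from this have "(y \<otimes> a) \<otimes> inv (x \<otimes> a) = y \<otimes> inv x"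
    using assms(2) by (simp add: inv_mult_group m_assoc[symmetric]) (simp add: m_assoc)
  ultimately show ?thesis
    using assms(2) by (simp add: cay_arcs_def)
qed

lemma cay_arcs_relpow_mult_right_iff:
  assumes "x \<in> carrier G" "y \<in> carrier G" "a \<in> carrier G"
  shows "(x \<otimes> a, y \<otimes> a) \<in> arcs ^^ n \<longleftrightarrow> (x, y) \<in> arcs ^^ n"
proof
  assume "(x \<otimes> a, y \<otimes> a) \<in> arcs ^^ n"
  then have "(x \<otimes> a \<otimes> inv a, y \<otimes> a \<otimes> inv a) \<in> arcs ^^ n"
    by (rule relpow_image[where f = "\<lambda>x. x \<otimes> inv a"]) (simp add: assms(3) cay_arcs_mult_right)
  with assms show "(x, y) \<in> arcs ^^ n"
    by (simp add: m_assoc)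
next
  assume "(x, y) \<in> arcs ^^ n"
  then show "(x \<otimes> a, y \<otimes> a) \<in> arcs ^^ n"
    by (rule relpow_image[where f = "\<lambda>x. x \<otimes> a"]) (simp add: assms(3) cay_arcs_mult_right)
qed

lemma twoway_dist_mult_right:
  "x \<in> carrier G \<Longrightarrow> y \<in> carrier G \<Longrightarrow> a \<in> carrier G \<Longrightarrow> td (x \<otimes> a) (y \<otimes> a) = td x y"
  by (simp add: twoway_dist_def ddist_def cay_arcs_relpow_mult_right_iff)

lemma twoway_dist_eq_twoway_dist_one:
  "x \<in> carrier G \<Longrightarrow> y \<in> carrier G \<Longrightarrow> td x y = td \<one> (y \<otimes> inv x)"
  using twoway_dist_mult_right[of x y "inv x"] by simp

lemma twoway_dist_one_inv: "y \<in> carrier G \<Longrightarrow> td \<one> (inv y) = prod.swap (td \<one> y)"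
  using twoway_dist_eq_twoway_dist_one[of y \<one>] by (simp add: twoway_dist_def)

lemma mem_cell_iff: "g \<in> cell k \<longleftrightarrow> g \<in> carrier G \<and> td \<one> g = k"
  by (simp add: N_set_def)

lemma inv_image_cell: "(\<lambda>x. inv x) ` cell k = cell (prod.swap k)"
proof (intro Set.set_eqI iffI)
  fix z assume "z \<in> (\<lambda>x. inv x) ` cell k"
  then show "z \<in> cell (prod.swap k)"
    by (auto simp: mem_cell_iff twoway_dist_one_inv)
next
  fix z assume "z \<in> cell (prod.swap k)"
  then have "inv z \<in> cell k" "z = inv (inv z)"
    by (auto simp: mem_cell_iff twoway_dist_one_inv)
  then show "z \<in> (\<lambda>x. inv x) ` cell k"
    by blast
qed

lemma mem_dists_iff: "k \<in> dists \<longleftrightarrow> (\<exists>g\<in>carrier G. td \<one> g = k)"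
proof
  assume "k \<in> dists"
  then obtain x y where "x \<in> carrier G" "y \<in> carrier G" "k = td x y"
    by (auto simp: twoway_dists_def)
  then have "y \<otimes> inv x \<in> carrier G" "td \<one> (y \<otimes> inv x) = k"
    by (simp_all add: twoway_dist_eq_twoway_dist_one[of x y])
  then show "\<exists>g\<in>carrier G. td \<one> g = k"
    by blast
next
  assume "\<exists>g\<in>carrier G. td \<one> g = k"
  then show "k \<in> dists"
    by (force simp: twoway_dists_def)
qed

lemma inj_on_zind_cell: "inj_on (\<lambda>k. zind G (cell k)) dists"
proof (rule inj_onI)
  fix i j assume "i \<in> dists" "j \<in> dists" and eq: "zind G (cell i) = zind G (cell j)"
  then obtain g where g: "g \<in> carrier G" "td \<one> g = i"
    by (auto simp: mem_dists_iff)
  then have "zind G (cell i) g = 1"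
    by (simp add: zind_def mem_cell_iff)
  then have "zind G (cell j) g = 1"
    by (simp only: eq)
  then have "g \<in> cell j"
    by (simp add: zind_def split: if_splits)
  with g show "i = j"
    by (simp add: mem_cell_iff)
qed

lemma cell_nonempty: "k \<in> dists \<Longrightarrow> cell k \<noteq> {}"
  unfolding mem_dists_iff using mem_cell_iff by blast

lemma cell_disjoint: "i \<noteq> j \<Longrightarrow> cell i \<inter> cell j = {}"
  by (auto simp: mem_cell_iff)

lemma Union_cells: "\<Union> (cell ` dists) = carrier G"
  by (auto simp: mem_cell_iff mem_dists_iff)

lemma swap_mem_dists: "k \<in> dists \<Longrightarrow> prod.swap k \<in> dists"
  using twoway_dist_one_inv by (auto simp: mem_dists_iff)

definition cell_fun :: "(nat \<times> nat \<Rightarrow> int) \<Rightarrow> 'a \<Rightarrow> int" where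
  "cell_fun F g = (if g \<in> carrier G then F (td \<one> g) else 0)"

lemma range_cell_fun_iff:
  "f \<in> range cell_fun \<longleftrightarrow> (\<forall>g. g \<notin> carrier G \<longrightarrow> f g = 0) \<and>
    (\<forall>a\<in>carrier G. \<forall>b\<in>carrier G. td \<one> a = td \<one> b \<longrightarrow> f a = f b)"
proof
  assume "f \<in> range cell_fun"
  then show "(\<forall>g. g \<notin> carrier G \<longrightarrow> f g = 0) \<and>
    (\<forall>a\<in>carrier G. \<forall>b\<in>carrier G. td \<one> a = td \<one> b \<longrightarrow> f a = f b)"
    by (auto simp: cell_fun_def)
next
  assume f: "(\<forall>g. g \<notin> carrier G \<longrightarrow> f g = 0) \<and>
    (\<forall>a\<in>carrier G. \<forall>b\<in>carrier G. td \<one> a = td \<one> b \<longrightarrow> f a = f b)"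
  define rep where "rep k = (SOME g. g \<in> carrier G \<and> td \<one> g = k)" for k
  have "f g = cell_fun (\<lambda>k. f (rep k)) g" for g
  proof (cases "g \<in> carrier G")
    case True
    have "rep (td \<one> g) \<in> carrier G \<and> td \<one> (rep (td \<one> g)) = td \<one> g"
      unfolding rep_def by (rule someI) (use True in blast)
    with f True show ?thesis
      unfolding cell_fun_def by (metis (no_types, lifting))
  next
    case False
    with f show ?thesis
      by (simp add: cell_fun_def)
  qed
  then show "f \<in> range cell_fun"
    by blast
qed

lemma saturated_right_coset_rel_iff:
  "saturated rels (right_coset_rel G X) \<longleftrightarrow>
    (\<forall>a\<in>carrier G. \<forall>b\<in>carrier G. td \<one> a = td \<one> b \<longrightarrow> a \<in> X \<longrightarrow> b \<in> X)"
  unfolding saturated_dist_rels_iff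
proof (intro iffI ballI impI)
  fix a b
  assume sat: "\<forall>x\<in>carrier G. \<forall>y\<in>carrier G. \<forall>x'\<in>carrier G. \<forall>y'\<in>carrier G.
      (x, y) \<in> right_coset_rel G X \<longrightarrow> td x' y' = td x y \<longrightarrow> (x', y') \<in> right_coset_rel G X"
    and ab: "a \<in> carrier G" "b \<in> carrier G" "td \<one> a = td \<one> b" "a \<in> X"
  have "(\<one>, a) \<in> right_coset_rel G X"
    using ab by (simp add: right_coset_rel_def)
  then have "(\<one>, b) \<in> right_coset_rel G X"
    using sat[rule_format, of \<one> a \<one> b] ab by simp
  with ab show "b \<in> X"
    by (simp add: right_coset_rel_def)
next
  fix x y x' y'
  assume cells: "\<forall>a\<in>carrier G. \<forall>b\<in>carrier G. td \<one> a = td \<one> b \<longrightarrow> a \<in> X \<longrightarrow> b \<in> X"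
    and carrier: "x \<in> carrier G" "y \<in> carrier G" "x' \<in> carrier G" "y' \<in> carrier G"
    and "(x, y) \<in> right_coset_rel G X" "td x' y' = td x y"
  have "td \<one> (y \<otimes> inv x) = td x y"
    using twoway_dist_eq_twoway_dist_one[OF carrier(1,2)] ..
  also have "\<dots> = td x' y'"
    using \<open>td x' y' = td x y\<close> ..
  also have "\<dots> = td \<one> (y' \<otimes> inv x')"
    using twoway_dist_eq_twoway_dist_one[OF carrier(3,4)] .
  finally have "td \<one> (y \<otimes> inv x) = td \<one> (y' \<otimes> inv x')" .
  moreover have "y \<otimes> inv x \<in> X"
    using \<open>(x, y) \<in> right_coset_rel G X\<close> by (simp add: right_coset_rel_def)
  ultimately have "y' \<otimes> inv x' \<in> X"
    using cells[rule_format, of "y \<otimes> inv x" "y' \<otimes> inv x'"] carrier by simp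
  with carrier show "(x', y') \<in> right_coset_rel G X"
    by (simp add: right_coset_rel_def)
qed

(* (f h)(g) is the sum of f x h (x^-1 g); with w = x^-1 it becomes a sum over the
  vertices w between g^-1 and e, which the intersection numbers control. *)
lemma zmult_cell_fun:
  assumes "g \<in> carrier G"
  shows "zmult G (cell_fun F) (cell_fun H) g = (\<Sum>w\<in>carrier G. H (td (inv g) w) * F (td w \<one>))"
proof -
  have "zmult G (cell_fun F) (cell_fun H) g = (\<Sum>x\<in>carrier G. F (td \<one> x) * H (td \<one> (inv x \<otimes> g)))"
    using assms by (simp add: zmult_def cell_fun_def)
  also have "\<dots> = (\<Sum>w\<in>carrier G. F (td \<one> (inv w)) * H (td \<one> (inv (inv w) \<otimes> g)))"
    by (rule sum.reindex_bij_witness[of _ "\<lambda>x. inv x" "\<lambda>x. inv x"]) auto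
  also have "\<dots> = (\<Sum>w\<in>carrier G. H (td (inv g) w) * F (td w \<one>))"
  proof (rule sum.cong[OF refl])
    fix w assume "w \<in> carrier G"
    with assms have "td \<one> (inv w) = td w \<one>" "td \<one> (w \<otimes> g) = td (inv g) w"
      using twoway_dist_eq_twoway_dist_one[of w \<one>] twoway_dist_eq_twoway_dist_one[of "inv g" w]
      by simp_all
    with \<open>w \<in> carrier G\<close> show "F (td \<one> (inv w)) * H (td \<one> (inv (inv w) \<otimes> g)) =
        H (td (inv g) w) * F (td w \<one>)"
      by simp
  qed
  finally show ?thesis .
qed

end

section \<open>The two-way distance module\<close>

locale wdr_cayley = cayley_digraph +
  assumes finite_carrier: "finite (carrier G)"
    and wdr: "weakly_distance_regular (carrier G) arcs"
begin

lemma finite_dists: "finite dists"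
  using finite_carrier by (simp add: twoway_dists_def)

lemma twoway_dist_one_eq_0_iff:
  assumes "g \<in> carrier G"
  shows "td \<one> g = (0, 0) \<longleftrightarrow> g = \<one>"
proof
  obtain n where "(\<one>, g) \<in> arcs ^^ n"
    using wdr assms by (auto simp: weakly_distance_regular_def strongly_connected_def)
  moreover assume "td \<one> g = (0, 0)"
  ultimately show "g = \<one>"
    by (metis ddist_eq_0D fst_conv twoway_dist_def)
qed (simp add: twoway_dist_refl)

lemma sum_zind_cells:
  "(\<Sum>b\<in>(\<lambda>k. zind G (cell k)) ` dists. c b * b g) =
    (if g \<in> carrier G then c (zind G (cell (td \<one> g))) else 0)"
proof -
  have "(\<Sum>b\<in>(\<lambda>k. zind G (cell k)) ` dists. c b * b g) =
      (\<Sum>k\<in>dists. c (zind G (cell k)) * zind G (cell k) g)"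
    by (simp add: sum.reindex[OF inj_on_zind_cell])
  also have "\<dots> = (\<Sum>k\<in>dists. if g \<in> carrier G \<and> k = td \<one> g then c (zind G (cell k)) else 0)"
    by (intro sum.cong) (auto simp: zind_def mem_cell_iff)
  also have "\<dots> = (if g \<in> carrier G then c (zind G (cell (td \<one> g))) else 0)"
    using finite_dists mem_dists_iff by (cases "g \<in> carrier G") auto
  finally show ?thesis .
qed

lemma twoway_module_eq_range_cell_fun: "twoway_module G S = range cell_fun"
proof (rule Set.set_eqI, rule iffI)
  fix f assume "f \<in> twoway_module G S"
  then obtain c where "f = (\<lambda>g. \<Sum>b\<in>(\<lambda>k. zind G (cell k)) ` dists. c b * b g)"
    by (auto simp: twoway_module_def zspan_def)
  then have "f = cell_fun (\<lambda>k. c (zind G (cell k)))"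
    by (simp add: sum_zind_cells cell_fun_def fun_eq_iff)
  then show "f \<in> range cell_fun"
    by blast
next
  fix f assume "f \<in> range cell_fun"
  then obtain F where f: "f = cell_fun F"
    by blast
  define c where "c b = F (inv_into dists (\<lambda>k. zind G (cell k)) b)" for b
  have "td \<one> g \<in> dists" if "g \<in> carrier G" for g
    using that mem_dists_iff by blast
  then have "f = (\<lambda>g. \<Sum>b\<in>(\<lambda>k. zind G (cell k)) ` dists. c b * b g)"
    by (auto simp: sum_zind_cells f cell_fun_def c_def inv_into_f_f[OF inj_on_zind_cell])
  then show "f \<in> twoway_module G S"
    by (auto simp: twoway_module_def zspan_def)
qed

lemma zind_mem_twoway_module_iff:
  "zind G X \<in> twoway_module G S \<longleftrightarrow>
    (\<forall>a\<in>carrier G. \<forall>b\<in>carrier G. td \<one> a = td \<one> b \<longrightarrow> a \<in> X \<longrightarrow> b \<in> X)"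
  unfolding twoway_module_eq_range_cell_fun range_cell_fun_iff by (auto simp: zind_def)

lemma zmult_cell_fun_mem: "zmult G (cell_fun F) (cell_fun H) \<in> range cell_fun"
  unfolding range_cell_fun_iff
proof (intro conjI allI impI ballI)
  fix g assume "g \<notin> carrier G"
  then show "zmult G (cell_fun F) (cell_fun H) g = 0"
    by (simp add: zmult_def)
next
  fix a b assume ab: "a \<in> carrier G" "b \<in> carrier G" "td \<one> a = td \<one> b"
  have "td (inv g) \<one> = td \<one> g" if "g \<in> carrier G" for g
    using that twoway_dist_eq_twoway_dist_one[of "inv g" \<one>] by simp
  with ab have "td (inv a) \<one> = td (inv b) \<one>"
    by simp
  with ab show "zmult G (cell_fun F) (cell_fun H) a = zmult G (cell_fun F) (cell_fun H) b"
    unfolding zmult_cell_fun[OF ab(1)] zmult_cell_fun[OF ab(2)]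
    by (intro weakly_distance_regular_sum_twoway_dist_eq[OF wdr]) simp_all
qed

lemma zsubring_twoway_module: "zsubring G (twoway_module G S)"
  unfolding zsubring_def twoway_module_eq_range_cell_fun
proof (intro conjI ballI)
  show "range cell_fun \<subseteq> zgroupring G"
    by (auto simp: cell_fun_def zgroupring_def)
  have "zind G {\<one>} \<in> twoway_module G S"
    unfolding zind_mem_twoway_module_iff
  proof (intro ballI impI)
    fix a b assume "a \<in> carrier G" "b \<in> carrier G" "td \<one> a = td \<one> b" "a \<in> {\<one>}"
    then have "td \<one> b = (0, 0)"
      by (simp add: twoway_dist_refl)
    with \<open>b \<in> carrier G\<close> show "b \<in> {\<one>}"
      by (simp add: twoway_dist_one_eq_0_iff)
  qed
  then show "zind G {\<one>} \<in> range cell_fun"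
    by (simp add: twoway_module_eq_range_cell_fun)
  show "(\<lambda>g. 0) \<in> range cell_fun"
    using range_cell_fun_iff by blast
  fix f h assume "f \<in> range cell_fun" "h \<in> range cell_fun"
  then obtain F H where f: "f = cell_fun F" and h: "h = cell_fun H"
    by blast
  have "(\<lambda>g. f g + h g) = cell_fun (\<lambda>k. F k + H k)"
    by (auto simp: f h cell_fun_def)
  then show "(\<lambda>g. f g + h g) \<in> range cell_fun"
    by simp
  have "(\<lambda>g. - f g) = cell_fun (\<lambda>k. - F k)"
    by (auto simp: f cell_fun_def)
  then show "(\<lambda>g. - f g) \<in> range cell_fun"
    by simp
  show "zmult G f h \<in> range cell_fun"
    unfolding f h by (rule zmult_cell_fun_mem)
qed

lemma cell_zero: "cell (0, 0) = {\<one>}"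
  using twoway_dist_one_eq_0_iff by (auto simp: mem_cell_iff)

lemma is_Sring_twoway_module: "is_Sring G (twoway_module G S)"
  unfolding is_Sring_def
proof (intro conjI exI[of _ "cell ` dists"])
  show "zsubring G (twoway_module G S)"
    by (rule zsubring_twoway_module)
  show "\<forall>X\<in>cell ` dists. X \<noteq> {}"
    by (simp add: Ball_image_comp cell_nonempty)
  show "\<forall>X\<in>cell ` dists. \<forall>Y\<in>cell ` dists. X \<noteq> Y \<longrightarrow> X \<inter> Y = {}"
    unfolding Ball_image_comp o_def by (metis cell_disjoint)
  show "\<Union> (cell ` dists) = carrier G"
    by (rule Union_cells)
  have "(0, 0) \<in> dists"
    unfolding mem_dists_iff by (rule bexI[of _ \<one>]) (simp_all add: twoway_dist_refl)
  then show "{\<one>} \<in> cell ` dists"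
    unfolding cell_zero[symmetric] by (rule imageI)
  show "\<forall>X\<in>cell ` dists. (\<lambda>x. inv x) ` X \<in> cell ` dists"
    by (simp add: Ball_image_comp inv_image_cell imageI swap_mem_dists)
  show "twoway_module G S = zspan (zind G ` cell ` dists)"
    by (simp add: twoway_module_def image_image)
  show "zindependent (zind G ` cell ` dists)"
    unfolding zindependent_def image_image
  proof (intro allI impI ballI)
    fix c b assume sum: "\<forall>g. (\<Sum>b\<in>(\<lambda>k. zind G (cell k)) ` dists. c b * b g) = 0"
      and b: "b \<in> (\<lambda>k. zind G (cell k)) ` dists"
    from b obtain k where "k \<in> dists" "b = zind G (cell k)"
      by (rule imageE)
    then obtain g where "g \<in> carrier G" "b = zind G (cell (td \<one> g))"
      unfolding mem_dists_iff by blast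
    with sum[rule_format, of g] show "c b = 0"
      by (simp add: sum_zind_cells)
  qed
qed

lemma saturated_equiv_eq_right_coset_rel:
  assumes equiv: "equiv (carrier G) Q" and sat: "saturated rels Q"
  obtains H where "subgroup H G" and "Q = right_coset_rel G H"
proof
  have shift: "(x, y) \<in> Q \<longleftrightarrow> (\<one>, y \<otimes> inv x) \<in> Q" if "x \<in> carrier G" "y \<in> carrier G" for x y
    using sat[unfolded saturated_dist_rels_iff, rule_format, of x y \<one> "y \<otimes> inv x"]
      sat[unfolded saturated_dist_rels_iff, rule_format, of \<one> "y \<otimes> inv x" x y]
      twoway_dist_eq_twoway_dist_one[OF that] that
    by auto
  define H where "H = {g \<in> carrier G. (\<one>, g) \<in> Q}"
  have Q_sub: "Q \<subseteq> carrier G \<times> carrier G"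
    using equiv by (rule equivE)
  show "Q = right_coset_rel G H"
    using Q_sub shift by (auto simp: H_def right_coset_rel_def)
  show "subgroup H G"
  proof (rule subgroupI)
    show "H \<subseteq> carrier G"
      by (auto simp: H_def)
    show "H \<noteq> {}"
      using equiv by (auto simp: H_def equiv_def refl_on_def)
  next
    fix h assume "h \<in> H"
    then have "h \<in> carrier G" "(h, \<one>) \<in> Q"
      using equiv by (auto simp: H_def equiv_def dest: symD)
    then show "inv h \<in> H"
      using shift[of h \<one>] by (simp add: H_def)
  next
    fix h k assume "h \<in> H" "k \<in> H"
    then have "h \<in> carrier G" "k \<in> carrier G" "(\<one>, h) \<in> Q" "(\<one>, k) \<in> Q"
      by (auto simp: H_def)
    moreover from this have "(k, h \<otimes> k) \<in> Q"
      using shift[of k "h \<otimes> k"] by (simp add: m_assoc)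
    ultimately show "h \<otimes> k \<in> H"
      using equiv by (auto simp: H_def equiv_def dest: transD)
  qed
qed

lemma zind_mem_twoway_module_iff_saturated:
  "zind G X \<in> twoway_module G S \<longleftrightarrow> saturated rels (right_coset_rel G X)"
  unfolding zind_mem_twoway_module_iff saturated_right_coset_rel_iff ..

lemma primitive_Sring_saturated_equiv:
  assumes prim: "primitive_Sring G (twoway_module G S)"
    and Q: "equiv (carrier G) Q" "saturated rels Q"
  shows "Q = Id_on (carrier G) \<or> Q = carrier G \<times> carrier G"
proof -
  obtain H where H: "subgroup H G" "Q = right_coset_rel G H"
    using Q by (rule saturated_equiv_eq_right_coset_rel)
  then have "zind G H \<in> twoway_module G S"
    using Q(2) by (simp add: zind_mem_twoway_module_iff_saturated)
  with prim H(1) have "H = {\<one>} \<or> H = carrier G"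
    by (simp add: primitive_Sring_def Sring_subgroup_def)
  then show ?thesis
    unfolding H(2) right_coset_rel_eq_Id_on_iff[OF subgroup.subset[OF H(1)]]
      right_coset_rel_eq_Times_iff[OF subgroup.subset[OF H(1)]] .
qed

lemma primitive_SringI_saturated_equiv:
  assumes triv: "\<And>Q. equiv (carrier G) Q \<Longrightarrow> saturated rels Q \<Longrightarrow>
      Q = Id_on (carrier G) \<or> Q = carrier G \<times> carrier G"
  shows "primitive_Sring G (twoway_module G S)"
  unfolding primitive_Sring_def Sring_subgroup_def
proof (intro conjI allI impI is_Sring_twoway_module, elim conjE)
  fix H assume H: "subgroup H G" "zind G H \<in> twoway_module G S"
  have "right_coset_rel G H = Id_on (carrier G) \<or> right_coset_rel G H = carrier G \<times> carrier G"
    using H by (intro triv equiv_right_coset_rel) (simp_all add: zind_mem_twoway_module_iff_saturated)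
  then show "H = {\<one>} \<or> H = carrier G"
    unfolding right_coset_rel_eq_Id_on_iff[OF subgroup.subset[OF H(1)]]
      right_coset_rel_eq_Times_iff[OF subgroup.subset[OF H(1)]] .
qed

theorem primitive_Sring_iff_saturated_equiv:
  "primitive_Sring G (twoway_module G S) \<longleftrightarrow>
    (\<forall>Q. equiv (carrier G) Q \<and> saturated rels Q \<longrightarrow>
      Q = Id_on (carrier G) \<or> Q = carrier G \<times> carrier G)"
  using primitive_Sring_saturated_equiv primitive_SringI_saturated_equiv by blast

end

theorem proposition4p3:
  fixes G :: "('a, 'b) monoid_scheme" and S :: "'a set"
  assumes "group G" and "finite (carrier G)"
    and "S \<subseteq> carrier G - {\<one>\<^bsub>G\<^esub>}"
    and "weakly_distance_regular (carrier G) (cay_arcs G S)"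
  shows "primitive_Sring G (twoway_module G S) \<longleftrightarrow>
         primitive_digraph (carrier G) (cay_arcs G S)"
proof -
  interpret wdr_cayley G S
    using assms by (simp add: wdr_cayley_def wdr_cayley_axioms_def cayley_digraph_def)
  have "assoc_scheme (carrier G) rels"
    using wdr by (simp add: weakly_distance_regular_def)
  then show ?thesis
    by (simp add: primitive_digraph_def primitive_Sring_iff_saturated_equiv
        primitive_scheme_iff_saturated_equiv)
qed

end
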